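(* Let $n\ge 1$ and let $P$ be a reachable position of $\mathrm{AGG}(n,A)$ containing at least one tile. Then there exist a nonempty cell $c$ of $P$, whose tile in $P$ has some value $v$, and a sequence of steps reaching $P$ from the initial position of the following form: first, a sequence of steps reaching the position $P'$ in which cell $c$ holds a tile of value $v$ and the other $n-1$ cells are empty; then a sequence of steps that never changes cell $c$ and uses only the other $n-1$ cells, forming a legal play of $\mathrm{AGG}(n-1,A)$ on those cells from its initial (all-empty) position, and reaching the position of $\mathrm{AGG}(n-1,A)$ obtained from $P$ by deleting cell $c$.
   Context: Let $A$ be a set of positive integers with $1\in A$ (the allowed tile values). For an integer $n\ge 0$, the abstract generalized 2048 game $\mathrm{AGG}(n,A)$ is played on $n$ indistinguishable cells. A position assigns to each cell either nothing (the cell is empty) or a tile carrying a value in $A$. The initial position has all cells empty. A step, which can be performed from any position having at least one empty cell, consists of: (i) placing a new tile of value $1$ into a chosen empty cell; then (ii) optionally choosing any collection of pairwise disjoint sets of nonempty cells such that the sum of the tile values in each chosen set belongs to $A$, and merging each chosen set into a single tile, whose value is that sum, placed in one cell of the set, the other cells of the set becoming empty. The game ends when, after a step, all cells are nonempty (no further step is then possible). A position is reachable if it can be obtained from the initial position by a finite sequence of steps. *)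

theory Defs
  imports Main
begin

(* Cells are natural numbers; a game is played on a finite cell set C.
   A position is a map cell => tile value option (None = empty cell).
   Cells outside C are always empty. *)
type_synonym pos = "nat \<Rightarrow> nat option"

definition init_pos :: pos where
  "init_pos = (\<lambda>_. None)"

definition merge :: "nat set \<Rightarrow> nat set \<Rightarrow> pos \<Rightarrow> pos \<Rightarrow> bool" where
  "merge A C p q \<longleftrightarrow>
     (\<exists>F rep.
        pairwise disjnt F \<and>
        (\<forall>S\<in>F. S \<subseteq> {x\<in>C. p x \<noteq> None} \<and> rep S \<in> S \<and>
                 (\<Sum>x\<in>S. the (p x)) \<in> A \<and>
                 q (rep S) = Some (\<Sum>x\<in>S. the (p x)) \<and>
                 (\<forall>x\<in>S. x \<noteq> rep S \<longrightarrow> q x = None)) \<and>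
        (\<forall>x. x \<notin> \<Union>F \<longrightarrow> q x = p x))"

definition step :: "nat set \<Rightarrow> nat set \<Rightarrow> pos \<Rightarrow> pos \<Rightarrow> bool" where
  "step A C p q \<longleftrightarrow> (\<exists>e\<in>C. p e = None \<and> merge A C (p(e := Some 1)) q)"

definition reachable :: "nat set \<Rightarrow> nat set \<Rightarrow> pos \<Rightarrow> bool" where
  "reachable A C p \<longleftrightarrow> (step A C)\<^sup>*\<^sup>* init_pos p"

end

(*
  Call a position peelable on a set of cells if it is empty, or it has a tile at some cell c
  whose value v alone at c is reachable, and the position without c is peelable on the other
  cells. A peelable position is reachable: build the tile at c first, then play the rest around
  it. The theorem is the first peeling step, so it suffices that every reachable position is
  peelable, which follows by induction along the play. For a merge, induct on the number of cells. If the peeled cell c is not merged,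
  peel it again and use induction on the remaining cells. If c lies in a merged set S with
  representative r, the new tile at r is reachable alone: the restriction of the position to S
  is peelable, hence reachable, and its last merge can be redone as one merging all its tiles
  into r (merging preserves the total). The rest of the position is obtained by induction on
  the cells other than c and then transported to the cells other than r by swapping c and r.
*)

theory Submission
  imports Defs "HOL-Combinatorics.Transposition"
begin

definition merges ::
    "nat set \<Rightarrow> nat set \<Rightarrow> nat set set \<Rightarrow> (nat set \<Rightarrow> nat) \<Rightarrow> pos \<Rightarrow> pos \<Rightarrow> bool" where
  "merges A C F rep p q \<longleftrightarrow>
     pairwise disjnt F \<and>
     (\<forall>S\<in>F. S \<subseteq> {x\<in>C. p x \<noteq> None} \<and> rep S \<in> S \<and>
              (\<Sum>x\<in>S. the (p x)) \<in> A \<and>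
              q (rep S) = Some (\<Sum>x\<in>S. the (p x)) \<and>
              (\<forall>x\<in>S. x \<noteq> rep S \<longrightarrow> q x = None)) \<and>
     (\<forall>x. x \<notin> \<Union>F \<longrightarrow> q x = p x)"

lemma merge_iff_merges: "merge A C p q \<longleftrightarrow> (\<exists>F rep. merges A C F rep p q)"
  unfolding merge_def merges_def ..

lemma mergesI:
  assumes "pairwise disjnt F"
    and "\<And>S. S \<in> F \<Longrightarrow> S \<subseteq> {x\<in>C. p x \<noteq> None}"
    and "\<And>S. S \<in> F \<Longrightarrow> rep S \<in> S"
    and "\<And>S. S \<in> F \<Longrightarrow> (\<Sum>x\<in>S. the (p x)) \<in> A"
    and "\<And>S. S \<in> F \<Longrightarrow> q (rep S) = Some (\<Sum>x\<in>S. the (p x))"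
    and "\<And>S x. S \<in> F \<Longrightarrow> x \<in> S \<Longrightarrow> x \<noteq> rep S \<Longrightarrow> q x = None"
    and "\<And>x. x \<notin> \<Union>F \<Longrightarrow> q x = p x"
  shows "merges A C F rep p q"
  using assms unfolding merges_def by blast

lemma
  assumes "merges A C F rep p q" and "S \<in> F"
  shows merges_member_subset: "S \<subseteq> {x\<in>C. p x \<noteq> None}"
    and merges_rep_mem: "rep S \<in> S"
    and merges_sum_mem: "(\<Sum>x\<in>S. the (p x)) \<in> A"
    and merges_rep_val: "q (rep S) = Some (\<Sum>x\<in>S. the (p x))"
    and merges_nonrep_empty: "\<And>x. x \<in> S \<Longrightarrow> x \<noteq> rep S \<Longrightarrow> q x = None"
  using assms unfolding merges_def by blast+

lemma merges_disjoint:
  "merges A C F rep p q \<Longrightarrow> S \<in> F \<Longrightarrow> T \<in> F \<Longrightarrow> S \<noteq> T \<Longrightarrow> disjnt S T"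
  unfolding merges_def pairwise_def by blast

lemma merges_outside: "merges A C F rep p q \<Longrightarrow> x \<notin> \<Union>F \<Longrightarrow> q x = p x"
  unfolding merges_def by blast

lemma merges_outside_board:
  assumes "merges A C F rep p q" and "x \<notin> C"
  shows "q x = p x"
proof -
  have "x \<notin> \<Union>F" using merges_member_subset[OF assms(1)] assms(2) by blast
  then show ?thesis by (rule merges_outside[OF assms(1)])
qed

lemma merges_empty_family: "merges A C {} rep p p"
  unfolding merges_def by simp

lemma merges_mono: "merges A C F rep p q \<Longrightarrow> C \<subseteq> C' \<Longrightarrow> merges A C' F rep p q"
  unfolding merges_def by blast

lemma merges_remove_empty_cell:
  "merges A C F rep p q \<Longrightarrow> p c = None \<Longrightarrow> merges A (C - {c}) F rep p q"
  unfolding merges_def by blast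

lemma merges_restrict:
  assumes m: "merges A C F rep p q" and sat: "\<And>S. S \<in> F \<Longrightarrow> S \<subseteq> U \<or> disjnt S U"
  shows "merges A C {S\<in>F. disjnt S U} rep (p |` (- U)) (q |` (- U))"
proof (rule mergesI)
  show "pairwise disjnt {S\<in>F. disjnt S U}"
    using m unfolding merges_def by (simp add: pairwise_def)
next
  fix S assume "S \<in> {S\<in>F. disjnt S U}"
  then have S: "S \<in> F" and SU: "\<And>x. x \<in> S \<Longrightarrow> x \<notin> U"
    by (auto simp: disjnt_iff)
  have same: "(\<Sum>x\<in>S. the ((p |` (- U)) x)) = (\<Sum>x\<in>S. the (p x))"
    using SU by (intro sum.cong) auto
  show "S \<subseteq> {x\<in>C. (p |` (- U)) x \<noteq> None}"
    using merges_member_subset[OF m S] SU by auto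
  show "rep S \<in> S" by (rule merges_rep_mem[OF m S])
  then show "(q |` (- U)) (rep S) = Some (\<Sum>x\<in>S. the ((p |` (- U)) x))"
    using merges_rep_val[OF m S] SU same by simp
  show "(\<Sum>x\<in>S. the ((p |` (- U)) x)) \<in> A"
    using merges_sum_mem[OF m S] same by simp
  show "\<And>x. x \<in> S \<Longrightarrow> x \<noteq> rep S \<Longrightarrow> (q |` (- U)) x = None"
    using merges_nonrep_empty[OF m S] SU by simp
next
  fix x assume x: "x \<notin> \<Union>{S\<in>F. disjnt S U}"
  show "(q |` (- U)) x = (p |` (- U)) x"
  proof (cases "x \<in> U")
    case False
    have "x \<notin> \<Union>F"
      using x sat False by blast
    then show ?thesis using merges_outside[OF m] False by simp
  qed simp
qed

lemma merges_add_fixed_cell: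
  assumes m: "merges A (C - {c}) F rep p q"
  shows "merges A C F rep (p(c := Some v)) (q(c := Some v))"
proof -
  have cF: "c \<notin> \<Union>F"
    using merges_member_subset[OF m] by blast
  have same: "(\<Sum>x\<in>S. the ((p(c := Some v)) x)) = (\<Sum>x\<in>S. the (p x))" if "S \<in> F" for S
    using cF that by (intro sum.cong) auto
  show ?thesis
  proof (rule mergesI)
    show "pairwise disjnt F" using m unfolding merges_def by blast
  next
    fix S assume S: "S \<in> F"
    then have cS: "c \<notin> S" using cF by blast
    show "S \<subseteq> {x\<in>C. (p(c := Some v)) x \<noteq> None}"
      using merges_member_subset[OF m S] by auto
    show "rep S \<in> S" by (rule merges_rep_mem[OF m S])
    show "(\<Sum>x\<in>S. the ((p(c := Some v)) x)) \<in> A"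
      using merges_sum_mem[OF m S] same[OF S] by simp
    show "(q(c := Some v)) (rep S) = Some (\<Sum>x\<in>S. the ((p(c := Some v)) x))"
      using merges_rep_val[OF m S] merges_rep_mem[OF m S] cS same[OF S] by auto
    show "\<And>x. x \<in> S \<Longrightarrow> x \<noteq> rep S \<Longrightarrow> (q(c := Some v)) x = None"
      using merges_nonrep_empty[OF m S] cS by auto
  next
    show "\<And>x. x \<notin> \<Union>F \<Longrightarrow> (q(c := Some v)) x = (p(c := Some v)) x"
      using merges_outside[OF m] by simp
  qed
qed

lemma merges_relabel:
  assumes m: "merges A C F rep p q" and inv: "\<And>x. f (f x) = x"
  shows "merges A (f ` C) ((`) f ` F) (\<lambda>T. f (rep (f ` T))) (p \<circ> f) (q \<circ> f)"
proof -
  have inj: "inj f" by (metis inv injI)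
  have mem: "\<And>x X. x \<in> f ` X \<longleftrightarrow> f x \<in> X" by (metis inv image_iff)
  have img_img: "\<And>X. f ` f ` X = X" using mem by blast
  have sum_eq: "(\<Sum>x\<in>f ` S. the ((p \<circ> f) x)) = (\<Sum>x\<in>S. the (p x))" for S
    using inj by (simp add: sum.reindex inj_on_subset inv)
  show ?thesis
  proof (rule mergesI)
    show "pairwise disjnt ((`) f ` F)"
    proof (rule pairwise_imageI)
      fix S T assume "S \<in> F" "T \<in> F" "S \<noteq> T"
      then show "disjnt (f ` S) (f ` T)"
        using merges_disjoint[OF m] mem by (simp add: disjnt_iff)
    qed
  next
    fix T assume "T \<in> (`) f ` F"
    then obtain S where S: "S \<in> F" and T: "T = f ` S" by blast
    show "T \<subseteq> {x\<in>f ` C. (p \<circ> f) x \<noteq> None}"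
      using merges_member_subset[OF m S] unfolding T by (auto simp: mem inv)
    show "f (rep (f ` T)) \<in> T"
      using merges_rep_mem[OF m S] unfolding T img_img by blast
    show "(\<Sum>x\<in>T. the ((p \<circ> f) x)) \<in> A"
      using merges_sum_mem[OF m S] unfolding T sum_eq .
    show "(q \<circ> f) (f (rep (f ` T))) = Some (\<Sum>x\<in>T. the ((p \<circ> f) x))"
      using merges_rep_val[OF m S] unfolding T sum_eq img_img by (simp add: inv)
    show "(q \<circ> f) x = None" if "x \<in> T" "x \<noteq> f (rep (f ` T))" for x
      using merges_nonrep_empty[OF m S, of "f x"] that unfolding T img_img by (metis comp_apply inv mem)
  next
    fix x assume "x \<notin> \<Union>((`) f ` F)"
    then have "f x \<notin> \<Union>F" using mem by blast
    then show "(q \<circ> f) x = (p \<circ> f) x" using merges_outside[OF m] by simp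
  qed
qed

lemma merges_dom_sum:
  assumes fin: "finite (dom p)" and m: "merges A C F rep p q"
  shows "dom q \<subseteq> dom p" and "(\<Sum>x\<in>dom q. the (q x)) = (\<Sum>x\<in>dom p. the (p x))"
proof -
  have FD: "\<And>S. S \<in> F \<Longrightarrow> S \<subseteq> dom p"
    using merges_member_subset[OF m] by blast
  have UD: "\<Union>F \<subseteq> dom p" using FD by blast
  have finF: "finite F" and finS: "\<And>S. S \<in> F \<Longrightarrow> finite S"
    using FD fin by (auto intro: finite_subset[of F "Pow (dom p)"] finite_subset)
  have repU: "rep ` F \<subseteq> \<Union>F" using merges_rep_mem[OF m] by blast
  have dq: "dom q = rep ` F \<union> (dom p - \<Union>F)"
  proof (intro equalityI subsetI)
    fix x assume x: "x \<in> dom q"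
    show "x \<in> rep ` F \<union> (dom p - \<Union>F)"
    proof (cases "x \<in> \<Union>F")
      case True
      then obtain S where "S \<in> F" "x \<in> S" by blast
      then show ?thesis using x merges_nonrep_empty[OF m] by (metis domIff image_eqI UnI1)
    next
      case False
      then show ?thesis using x merges_outside[OF m] by (simp add: domIff)
    qed
  next
    fix x assume "x \<in> rep ` F \<union> (dom p - \<Union>F)"
    then show "x \<in> dom q" using merges_rep_val[OF m] merges_outside[OF m] by (auto simp: domIff)
  qed
  then show "dom q \<subseteq> dom p" using repU UD by blast
  have inj: "inj_on rep F"
    by (rule inj_onI) (metis disjnt_iff m merges_disjoint merges_rep_mem)
  have "(\<Sum>x\<in>dom q. the (q x)) = (\<Sum>x\<in>rep ` F. the (q x)) + (\<Sum>x\<in>dom p - \<Union>F. the (q x))"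
    unfolding dq using finF fin repU by (intro sum.union_disjoint) auto
  also have "(\<Sum>x\<in>rep ` F. the (q x)) = (\<Sum>S\<in>F. \<Sum>x\<in>S. the (p x))"
    using inj by (simp add: sum.reindex merges_rep_val[OF m])
  also have "\<dots> = (\<Sum>x\<in>\<Union>F. the (p x))"
    using finS merges_disjoint[OF m] by (subst sum.Union_disjoint) (auto simp: disjnt_def)
  also have "(\<Sum>x\<in>dom p - \<Union>F. the (q x)) = (\<Sum>x\<in>dom p - \<Union>F. the (p x))"
    using merges_outside[OF m] by (intro sum.cong) auto
  also have "(\<Sum>x\<in>\<Union>F. the (p x)) + \<dots> = (\<Sum>x\<in>dom p. the (p x))"
    using sum.subset_diff[OF UD fin, of "\<lambda>x. the (p x)"] by (simp add: add.commute)
  finally show "(\<Sum>x\<in>dom q. the (q x)) = (\<Sum>x\<in>dom p. the (p x))" .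
qed

lemma step_iff_merges:
  "step A C p q \<longleftrightarrow> (\<exists>e\<in>C. p e = None \<and> (\<exists>F rep. merges A C F rep (p(e := Some 1)) q))"
  unfolding step_def merge_iff_merges ..

lemma step_mono: "step A C p q \<Longrightarrow> C \<subseteq> C' \<Longrightarrow> step A C' p q"
  unfolding step_iff_merges by (meson merges_mono subsetD)

lemma step_outside_board: "step A C p q \<Longrightarrow> x \<notin> C \<Longrightarrow> q x = p x"
  unfolding step_iff_merges by (metis fun_upd_other merges_outside_board)

lemma step_add_fixed_cell:
  "step A (C - {c}) p q \<Longrightarrow> step A C (p(c := Some v)) (q(c := Some v))"
  unfolding step_iff_merges
  by (metis (no_types, lifting) DiffE fun_upd_twist fun_upd_other insertI1 merges_add_fixed_cell)

lemma step_relabel: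
  assumes "step A C p q" and inv: "\<And>x. f (f x) = x"
  shows "step A (f ` C) (p \<circ> f) (q \<circ> f)"
proof -
  obtain e F rep where e: "e \<in> C" "p e = None" and m: "merges A C F rep (p(e := Some 1)) q"
    using assms(1) unfolding step_iff_merges by blast
  have "(p \<circ> f)(f e := Some 1) = p(e := Some 1) \<circ> f"
    using inv by (auto simp: fun_eq_iff)
  then show ?thesis
    using merges_relabel[OF m inv] e inv unfolding step_iff_merges by (metis comp_apply imageI)
qed

lemma reachable_mono: "reachable A C p \<Longrightarrow> C \<subseteq> C' \<Longrightarrow> reachable A C' p"
  unfolding reachable_def by (metis mono_rtranclp step_mono)

lemma reachable_dom: "reachable A C p \<Longrightarrow> dom p \<subseteq> C"
  unfolding reachable_def
proof (induction rule: rtranclp_induct)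
  case (step y z)
  then show ?case using step_outside_board[OF step.hyps(2)] by (fastforce simp: domIff)
qed (simp add: init_pos_def)

lemma steps_add_fixed_cell:
  "(step A (C - {c}))\<^sup>*\<^sup>* p q \<Longrightarrow> (step A C)\<^sup>*\<^sup>* (p(c := Some v)) (q(c := Some v))"
  by (induction rule: rtranclp_induct) (simp, metis rtranclp.rtrancl_into_rtrancl step_add_fixed_cell)

lemma reachable_relabel:
  assumes "reachable A C p" and inv: "\<And>x. f (f x) = x"
  shows "reachable A (f ` C) (p \<circ> f)"
proof -
  have "(step A (f ` C))\<^sup>*\<^sup>* (init_pos \<circ> f) (p \<circ> f)"
    using assms(1) unfolding reachable_def
    by (induction rule: rtranclp_induct) (simp, metis rtranclp.rtrancl_into_rtrancl step_relabel inv)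
  moreover have "init_pos \<circ> f = init_pos" by (simp add: init_pos_def comp_def)
  ultimately show ?thesis unfolding reachable_def by simp
qed

lemma reachable_single_one: "e \<in> C \<Longrightarrow> reachable A C (init_pos(e := Some 1))"
  unfolding reachable_def step_iff_merges
  by (rule r_into_rtranclp) (auto simp: init_pos_def intro: merges_empty_family)

text \<open>The last merge of a play reaching \<open>p\<close> may be replaced by one merging all occupied cells
  into \<open>r\<close>: the cells occupied before it carry the same total as \<open>p\<close>.\<close>

lemma reachable_collapse:
  assumes fin: "finite C" and reach: "reachable A C p" and r: "r \<in> dom p"
    and total: "(\<Sum>x\<in>dom p. the (p x)) \<in> A"
  shows "reachable A C (init_pos(r := Some (\<Sum>x\<in>dom p. the (p x))))"
proof -
  have "p \<noteq> init_pos" using r by (auto simp: init_pos_def)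
  then obtain y where y: "reachable A C y" and "step A C y p"
    using reach unfolding reachable_def by (metis rtranclp.cases)
  then obtain e F rep where e: "e \<in> C" "y e = None"
    and m: "merges A C F rep (y(e := Some 1)) p"
    unfolding step_iff_merges by blast
  define y1 where "y1 = y(e := Some 1)"
  have y1C: "dom y1 \<subseteq> C" using reachable_dom[OF y] e unfolding y1_def by auto
  then have "finite (dom y1)" using fin finite_subset by blast
  note conserved = merges_dom_sum[OF this m[folded y1_def]]
  have "merges A C {dom y1} (\<lambda>_. r) y1 (init_pos(r := Some (\<Sum>x\<in>dom p. the (p x))))"
    using conserved r total y1C by (intro mergesI) (auto simp: init_pos_def domIff)
  then have "step A C y (init_pos(r := Some (\<Sum>x\<in>dom p. the (p x))))"
    unfolding step_iff_merges y1_def using e by blast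
  with y show ?thesis unfolding reachable_def by (meson rtranclp.rtrancl_into_rtrancl)
qed

inductive peelable :: "nat set \<Rightarrow> nat set \<Rightarrow> pos \<Rightarrow> bool" for A where
  empty: "peelable A C init_pos"
| peel: "c \<in> C \<Longrightarrow> p c = Some v \<Longrightarrow> reachable A C (init_pos(c := Some v)) \<Longrightarrow>
         peelable A (C - {c}) (p(c := None)) \<Longrightarrow> peelable A C p"

lemma peelable_reachable: "peelable A C p \<Longrightarrow> reachable A C p"
proof (induction rule: peelable.induct)
  case (empty C)
  then show ?case by (simp add: reachable_def)
next
  case (peel c C p v)
  have "(step A C)\<^sup>*\<^sup>* (init_pos(c := Some v)) ((p(c := None))(c := Some v))"
    using peel.IH unfolding reachable_def by (rule steps_add_fixed_cell)
  moreover have "(p(c := None))(c := Some v) = p" using peel.hyps(2) by auto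
  ultimately show ?case using peel.hyps(3) unfolding reachable_def by (metis rtranclp_trans)
qed

lemma peelable_mono: "peelable A C p \<Longrightarrow> C \<subseteq> C' \<Longrightarrow> peelable A C' p"
proof (induction arbitrary: C' rule: peelable.induct)
  case (peel c C p v)
  have "c \<in> C'" using peel.hyps(1) peel.prems by blast
  moreover have "reachable A C' (init_pos(c := Some v))"
    using peel.hyps(3) peel.prems by (rule reachable_mono)
  moreover have "peelable A (C' - {c}) (p(c := None))" using peel.IH peel.prems by blast
  ultimately show ?case using peel.hyps(2) by (metis peelable.peel)
qed (rule peelable.empty)

lemma peelable_restrict: "peelable A C p \<Longrightarrow> peelable A C (p |` K)"
proof (induction rule: peelable.induct)
  case (empty C)
  have "init_pos |` K = init_pos" by (auto simp: init_pos_def)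
  then show ?case by (simp add: peelable.empty)
next
  case (peel c C p v)
  show ?case
  proof (cases "c \<in> K")
    case True
    have restrict_upd: "(p |` K)(c := None) = (p(c := None)) |` K" by (auto simp: restrict_map_def)
    have "(p |` K) c = Some v" using True peel.hyps(2) by simp
    moreover have "peelable A (C - {c}) ((p |` K)(c := None))" unfolding restrict_upd by (rule peel.IH)
    ultimately show ?thesis using peel.hyps(1,3) by (metis peelable.peel)
  next
    case False
    then have restrict_eq: "p |` K = (p(c := None)) |` K" by (auto simp: restrict_map_def)
    have "peelable A C ((p(c := None)) |` K)" using peel.IH by (rule peelable_mono) blast
    then show ?thesis unfolding restrict_eq .
  qed
qed

lemma peelable_place:
  "peelable A C p \<Longrightarrow> e \<in> C \<Longrightarrow> p e = None \<Longrightarrow> peelable A C (p(e := Some 1))"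
proof (induction rule: peelable.induct)
  case (empty C)
  have "(init_pos(e := Some 1))(e := None) = init_pos" by (simp add: init_pos_def fun_eq_iff)
  then have rest: "peelable A (C - {e}) ((init_pos(e := Some 1))(e := None))"
    by (simp add: peelable.empty)
  show ?case
    by (rule peelable.peel[OF empty(1) _ reachable_single_one[OF empty(1)] rest]) simp
next
  case (peel c C p v)
  then have "c \<noteq> e" by auto
  then have twist: "(p(e := Some 1))(c := None) = (p(c := None))(e := Some 1)"
    by (rule fun_upd_twist[OF not_sym])
  have "peelable A (C - {c}) ((p(c := None))(e := Some 1))"
    using peel.prems \<open>c \<noteq> e\<close> by (intro peel.IH) auto
  then have "peelable A (C - {c}) ((p(e := Some 1))(c := None))" unfolding twist .
  moreover have "(p(e := Some 1)) c = Some v" using \<open>c \<noteq> e\<close> peel.hyps(2) by simp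
  ultimately show ?case using peel.hyps(1,3) by (metis peelable.peel)
qed

lemma peelable_relabel:
  "peelable A C p \<Longrightarrow> (\<And>x. f (f x) = x) \<Longrightarrow> peelable A (f ` C) (p \<circ> f)"
proof (induction rule: peelable.induct)
  case (empty C)
  have "init_pos \<circ> f = init_pos" by (simp add: init_pos_def comp_def)
  then show ?case by (simp add: peelable.empty)
next
  case (peel c C p v)
  have inj: "inj f" using peel.prems by (metis injI)
  have fx: "f x = c \<longleftrightarrow> x = f c" for x
    using peel.prems[of x] peel.prems[of c] by auto
  have "reachable A (f ` C) (init_pos(f c := Some v))"
  proof -
    have "init_pos(c := Some v) \<circ> f = init_pos(f c := Some v)"
      by (simp add: fun_eq_iff fx init_pos_def)
    then show ?thesis using reachable_relabel[OF peel.hyps(3) peel.prems] by simp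
  qed
  moreover have "peelable A (f ` C - {f c}) ((p \<circ> f)(f c := None))"
  proof -
    have dom_eq: "f ` (C - {c}) = f ` C - {f c}" using inj by (simp add: image_set_diff)
    have pos_eq: "p(c := None) \<circ> f = (p \<circ> f)(f c := None)" by (simp add: fun_eq_iff fx)
    show ?thesis using peel.IH[OF peel.prems] unfolding dom_eq pos_eq .
  qed
  moreover have "(p \<circ> f) (f c) = Some v" using peel.hyps(2) peel.prems by simp
  moreover have "f c \<in> f ` C" using peel.hyps(1) by (rule imageI)
  ultimately show ?case by (metis peelable.peel)
qed

lemma peelable_move_empty_cell:
  assumes peelable: "peelable A (C - {c}) p" and "c \<in> C" "r \<in> C" "p r = None"
  shows "peelable A (C - {r}) p"
proof -
  have "p c = None" using reachable_dom[OF peelable_reachable[OF peelable]] by auto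
  then have pos_eq: "p \<circ> transpose c r = p"
    using \<open>p r = None\<close> by (auto simp: fun_eq_iff transpose_def)
  have board_eq: "transpose c r ` (C - {c}) = C - {r}"
    using \<open>c \<in> C\<close> \<open>r \<in> C\<close> by (simp add: image_set_diff inj_transpose)
  have "peelable A (transpose c r ` (C - {c})) (p \<circ> transpose c r)"
    using peelable by (rule peelable_relabel) simp
  then show ?thesis unfolding pos_eq board_eq .
qed

lemma peelable_collapse:
  assumes "finite C" and "peelable A C p" and "S \<subseteq> dom p" and "r \<in> S"
    and "(\<Sum>x\<in>S. the (p x)) \<in> A"
  shows "reachable A C (init_pos(r := Some (\<Sum>x\<in>S. the (p x))))"
proof -
  have "reachable A C (p |` S)" using peelable_restrict[OF assms(2)] by (rule peelable_reachable)
  moreover have "dom (p |` S) = S" using assms(3) by auto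
  moreover have "(\<Sum>x\<in>S. the ((p |` S) x)) = (\<Sum>x\<in>S. the (p x))" by simp
  ultimately show ?thesis using reachable_collapse[of C A "p |` S" r] assms by simp
qed

lemma peelable_merges:
  assumes "finite C" and "peelable A C p" and "merges A C F rep p q"
  shows "peelable A C q"
  using assms
proof (induction "card C" arbitrary: C p q F rep rule: less_induct)
  case less
  note m = less.prems(3)
  from less.prems(2) show ?case
  proof cases
    case empty
    then have "\<Union>F = {}"
      using merges_member_subset[OF m] merges_rep_mem[OF m] by (fastforce simp: init_pos_def)
    then have "q = p" using merges_outside[OF m] by (intro ext) blast
    then show ?thesis using less.prems(2) by simp
  next
    case (peel c v)
    have IH: "peelable A (C - {c}) q'"
      if "peelable A (C - {c}) p'" and "merges A (C - {c}) F' rep' p' q'" for p' q' F' rep'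
      using less.hyps[OF card_Diff1_less[OF less.prems(1) peel(1)] _ that] less.prems(1) by simp
    show ?thesis
    proof (cases "c \<in> \<Union>F")
      case False
      then have "merges A C {S\<in>F. disjnt S {c}} rep (p |` (- {c})) (q |` (- {c}))"
        by (intro merges_restrict[OF m]) (auto simp: disjnt_iff)
      then have "merges A (C - {c}) {S\<in>F. disjnt S {c}} rep (p(c := None)) (q(c := None))"
        unfolding restrict_complement_singleton_eq by (rule merges_remove_empty_cell) simp
      then have "peelable A (C - {c}) (q(c := None))" by (rule IH[OF peel(4)])
      moreover have "q c = Some v" using merges_outside[OF m False] peel(2) by simp
      ultimately show ?thesis using peel(1,3) by (metis peelable.peel)
    next
      case True
      then obtain S where S: "S \<in> F" "c \<in> S" by blast
      define r w where "r = rep S" and "w = (\<Sum>x\<in>S. the (p x))"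
      have r: "r \<in> S" "q r = Some w"
        unfolding r_def w_def using merges_rep_mem[OF m S(1)] merges_rep_val[OF m S(1)] by auto
      have S_occupied: "S \<subseteq> {x\<in>C. p x \<noteq> None}" by (rule merges_member_subset[OF m S(1)])
      then have "reachable A C (init_pos(r := Some w))"
        unfolding w_def using less.prems(1,2) r(1) merges_sum_mem[OF m S(1)]
        by (intro peelable_collapse) auto
      moreover have "peelable A (C - {r}) (q(r := None))"
      proof -
        have "merges A C {T\<in>F. disjnt T S} rep (p |` (- S)) (q |` (- S))"
          using merges_disjoint[OF m S(1)]
          by (intro merges_restrict[OF m]) (metis disjnt_sym order_refl)
        moreover have "q |` (- S) = q(r := None)"
          using merges_nonrep_empty[OF m S(1)] r(1) unfolding r_def
          by (auto simp: restrict_map_def fun_eq_iff)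
        ultimately have "merges A (C - {c}) {T\<in>F. disjnt T S} rep (p |` (- S)) (q(r := None))"
          using S(2) by (auto intro: merges_remove_empty_cell)
        moreover have "(p(c := None)) |` (- S) = p |` (- S)"
          using S(2) by (auto simp: restrict_map_def)
        then have "peelable A (C - {c}) (p |` (- S))"
          using peelable_restrict[OF peel(4), of "- S"] by simp
        ultimately have "peelable A (C - {c}) (q(r := None))" by (rule IH[rotated])
        moreover have "r \<in> C" using r(1) S_occupied by blast
        ultimately show ?thesis by (rule peelable_move_empty_cell[OF _ peel(1)]) simp
      qed
      moreover have "r \<in> C" using r(1) S_occupied by blast
      ultimately show ?thesis using r(2) by (metis peelable.peel)
    qed
  qed
qed

lemma reachable_peelable: "reachable A C p \<Longrightarrow> finite C \<Longrightarrow> peelable A C p"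
  unfolding reachable_def
proof (induction rule: rtranclp_induct)
  case base
  show ?case by (rule peelable.empty)
next
  case (step y z)
  then obtain e F rep where e: "e \<in> C" "y e = None" and m: "merges A C F rep (y(e := Some 1)) z"
    unfolding step_iff_merges by blast
  have "peelable A C (y(e := Some 1))" by (rule peelable_place[OF step.IH[OF step.prems] e])
  then show ?case by (rule peelable_merges[OF step.prems _ m])
qed

theorem lemma1:
  fixes A :: "nat set" and n :: nat and P :: pos
  assumes "\<forall>a\<in>A. a > 0" and "1 \<in> A" and "n \<ge> 1"
    and "reachable A {..<n} P"
    and "\<exists>x<n. P x \<noteq> None"
  shows "\<exists>c v. c < n \<and> P c = Some v \<and>
           reachable A {..<n} (init_pos(c := Some v)) \<and>
           (\<lambda>p q. step A ({..<n} - {c}) p q \<and>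
                   step A {..<n} (p(c := Some v)) (q(c := Some v)))\<^sup>*\<^sup>*
             init_pos (P(c := None))"
proof -
  have "peelable A {..<n} P" using reachable_peelable[OF assms(4)] by simp
  moreover have "P \<noteq> init_pos" using assms(5) by (auto simp: init_pos_def)
  ultimately obtain c v where c: "c < n" "P c = Some v" "reachable A {..<n} (init_pos(c := Some v))"
    and rest: "peelable A ({..<n} - {c}) (P(c := None))"
    by (cases rule: peelable.cases) auto
  have "(step A ({..<n} - {c}))\<^sup>*\<^sup>* init_pos (P(c := None))"
    using peelable_reachable[OF rest] unfolding reachable_def .
  then have "(\<lambda>p q. step A ({..<n} - {c}) p q \<and>
                   step A {..<n} (p(c := Some v)) (q(c := Some v)))\<^sup>*\<^sup>*
             init_pos (P(c := None))"
    by (rule rtranclp_mono[THEN predicate2D, rotated]) (auto intro: step_add_fixed_cell)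
  with c show ?thesis by blast
qed

end
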